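(* Let $\Sigma\in\mathbb{R}^{N\times N}$ be symmetric positive definite, $\mathcal T$ a binary tree whose leaves are the assets $1,\dots,N$, and $\gamma\in[0,1]$. For all $\mu\in\mathbb{R}^N$ outside a Lebesgue-measure-zero subset of $\mathbb{R}^N$, the aggregate signal $s_n$ computed by the HRP-$\Sigma\mu$ algorithm is nonzero at every internal node $n$ of $\mathcal T$. In particular, the $L^1$ denominator $|\alpha_L^{\mathrm{raw}}|+|\alpha_R^{\mathrm{raw}}|$ is strictly positive at every internal node and the algorithm is well defined.
   Context: HRP-$\Sigma\mu$ algorithm (inputs $\Sigma,\mu,\mathcal T,\gamma$), defined recursively. At a leaf (asset $i$) return $\hat w=(1)$, $v=\Sigma_{ii}$, $s=\mu_i$. At an internal node $n$ with left and right subtrees having leaf index sets $L,R$: recursively obtain $(\hat w_L,v_L,s_L)$ and $(\hat w_R,v_R,s_R)$; set $c=\hat w_L^\top\Sigma_{LR}\hat w_R$, $\Delta=v_Lv_R-\gamma^2c^2$, $\alpha_L^{\mathrm{raw}}=(v_Rs_L-\gamma cs_R)/\Delta$, $\alpha_R^{\mathrm{raw}}=(v_Ls_R-\gamma cs_L)/\Delta$, $Z=|\alpha_L^{\mathrm{raw}}|+|\alpha_R^{\mathrm{raw}}|$, $\alpha_k=\alpha_k^{\mathrm{raw}}/Z$; the node representative is the stacked vector $\hat w_n=(\alpha_L\hat w_L,\alpha_R\hat w_R)\in\mathbb{R}^{L\cup R}$, with $v_n=\hat w_n^\top\Sigma_{nn}\hat w_n$ and $s_n=\hat w_n^\top\mu_n$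 (subscripts denote sub-blocks/subvectors on the node's index set). The output is the representative at the root. *)

theory Defs
  imports "HOL-Analysis.Analysis"
begin

datatype 'a btree = Leaf 'a | Node "'a btree" "'a btree"

fun leaves :: "'a btree \<Rightarrow> 'a list" where
  "leaves (Leaf i) = [i]"
| "leaves (Node l r) = leaves l @ leaves r"

fun subtrees :: "'a btree \<Rightarrow> 'a btree set" where
  "subtrees (Leaf i) = {Leaf i}"
| "subtrees (Node l r) = insert (Node l r) (subtrees l \<union> subtrees r)"

fun is_internal :: "'a btree \<Rightarrow> bool" where
  "is_internal (Leaf _) = False"
| "is_internal (Node _ _) = True"

definition valid_tree :: "'n btree \<Rightarrow> bool" where
  "valid_tree T \<longleftrightarrow> distinct (leaves T) \<and> set (leaves T) = (UNIV :: 'n set)"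

definition symmetric_pd :: "real^'n^'n \<Rightarrow> bool" where
  "symmetric_pd S \<longleftrightarrow> transpose S = S \<and> (\<forall>x. x \<noteq> 0 \<longrightarrow> x \<bullet> (S *v x) > 0)"

text \<open>Quadratic / bilinear forms for weight vectors given as functions on assets
  (weights vanish outside the node's leaf set, so sums over all assets equal sums
  over the relevant sub-blocks).\<close>
definition bil :: "real^'n^'n \<Rightarrow> ('n::finite \<Rightarrow> real) \<Rightarrow> ('n \<Rightarrow> real) \<Rightarrow> real" where
  "bil S a b = (\<Sum>i\<in>UNIV. \<Sum>j\<in>UNIV. a i * S $ i $ j * b j)"

definition dotv :: "('n::finite \<Rightarrow> real) \<Rightarrow> real^'n \<Rightarrow> real" where
  "dotv a m = (\<Sum>i\<in>UNIV. a i * m $ i)"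

definition raw_alphas ::
  "real^'n^'n \<Rightarrow> real \<Rightarrow> ('n::finite \<Rightarrow> real) \<times> real \<times> real \<Rightarrow> ('n \<Rightarrow> real) \<times> real \<times> real
     \<Rightarrow> real \<times> real" where
  "raw_alphas S \<gamma> resL resR =
     (case resL of (wL, vL, sL) \<Rightarrow> case resR of (wR, vR, sR) \<Rightarrow>
       (let c = bil S wL wR; \<Delta> = vL * vR - \<gamma>^2 * c^2
        in ((vR * sL - \<gamma> * c * sR) / \<Delta>, (vL * sR - \<gamma> * c * sL) / \<Delta>)))"

text \<open>HRP-Sigma-mu: returns (representative weight vector, v, s) for a (sub)tree.\<close>
fun hrp :: "real^'n^'n \<Rightarrow> real^'n \<Rightarrow> real \<Rightarrow> ('n::finite) btree \<Rightarrow> ('n \<Rightarrow> real) \<times> real \<times> real" where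
  "hrp S \<mu> \<gamma> (Leaf i) = ((\<lambda>j. if j = i then 1 else 0), S $ i $ i, \<mu> $ i)"
| "hrp S \<mu> \<gamma> (Node l r) =
     (let resL = hrp S \<mu> \<gamma> l; resR = hrp S \<mu> \<gamma> r;
          (aL, aR) = raw_alphas S \<gamma> resL resR;
          Z = \<bar>aL\<bar> + \<bar>aR\<bar>;
          w = (\<lambda>j. (aL / Z) * fst resL j + (aR / Z) * fst resR j)
      in (w, bil S w w, dotv w \<mu>))"

definition hrp_signal :: "real^'n^'n \<Rightarrow> real^'n \<Rightarrow> real \<Rightarrow> ('n::finite) btree \<Rightarrow> real" where
  "hrp_signal S \<mu> \<gamma> t = snd (snd (hrp S \<mu> \<gamma> t))"

fun hrp_denominator :: "real^'n^'n \<Rightarrow> real^'n \<Rightarrow> real \<Rightarrow> ('n::finite) btree \<Rightarrow> real" where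
  "hrp_denominator S \<mu> \<gamma> (Leaf i) = 1"
| "hrp_denominator S \<mu> \<gamma> (Node l r) =
     (case raw_alphas S \<gamma> (hrp S \<mu> \<gamma> l) (hrp S \<mu> \<gamma> r) of (aL, aR) \<Rightarrow> \<bar>aL\<bar> + \<bar>aR\<bar>)"

end

theory Submission
  imports Defs
begin

text \<open>The representative of a subtree is a nonzero weight vector supported on its leaves, so the
  representatives of two siblings have disjoint supports. Strict Cauchy-Schwarz for the positive
  definite \<open>\<Sigma>\<close> then gives \<open>c\<^sup>2 < v_L v_R\<close>, hence \<open>\<Delta> > 0\<close> for \<open>\<gamma> \<le> 1\<close>, and for the raw
  coefficients \<open>\<alpha>_L s_L + \<alpha>_R s_R = (v_R s_L\<^sup>2 - 2 \<gamma> c s_L s_R + v_L s_R\<^sup>2) / \<Delta>\<close>, a positive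
  definite binary quadratic form in \<open>(s_L, s_R)\<close> divided by \<open>\<Delta>\<close>. So as soon as one child has a
  nonzero signal, the raw coefficients do not both vanish and the signal of the node is positive.
  By induction from the leaves, whose signals are the \<open>\<mu>_i\<close>, this holds at every internal node
  whenever no \<open>\<mu>_i\<close> vanishes, i.e. outside finitely many coordinate hyperplanes.\<close>

lemma bil_lincomb_left:
  "bil S (\<lambda>j. a * f j + b * g j) h = a * bil S f h + b * bil S g h"
  unfolding bil_def by (simp add: algebra_simps sum.distrib sum_distrib_left)

lemma bil_commute:
  assumes "transpose S = S"
  shows "bil S f g = bil S g f"
proof -
  have "S $ i $ j = S $ j $ i" for i j
    using arg_cong[OF assms, of "\<lambda>M. M $ j $ i"] by (simp add: transpose_def)
  then show ?thesis
    unfolding bil_def by (subst sum.swap) (simp add: mult.commute mult.left_commute)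
qed

lemma bil_lincomb_right:
  assumes "transpose S = S"
  shows "bil S h (\<lambda>j. a * f j + b * g j) = a * bil S h f + b * bil S h g"
  by (subst (1 2 3) bil_commute[OF assms, of h]) (simp add: bil_lincomb_left)

lemma bil_unit_vectors:
  "bil S (\<lambda>j. if j = i then 1 else 0) (\<lambda>j. if j = k then 1 else 0) = S $ i $ k"
  unfolding bil_def by (simp add: mult_delta_left mult_delta_right sum.delta)

lemma bil_self_pos:
  assumes "symmetric_pd S" and "f \<noteq> (\<lambda>_. 0)"
  shows "bil S f f > 0"
proof -
  define x where "x = vec_lambda f"
  have "x \<noteq> 0"
    using assms(2) unfolding x_def by (metis vec_eq_iff vec_lambda_beta zero_index ext)
  then have "x \<bullet> (S *v x) > 0"
    using assms(1) unfolding symmetric_pd_def by blast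
  also have "x \<bullet> (S *v x) = bil S f f"
    unfolding bil_def inner_vec_def matrix_vector_mult_def x_def
    by (simp add: sum_distrib_left algebra_simps)
  finally show ?thesis .
qed

lemma dotv_lincomb:
  "dotv (\<lambda>j. a * f j + b * g j) m = a * dotv f m + b * dotv g m"
  unfolding dotv_def by (simp add: algebra_simps sum.distrib sum_distrib_left)

lemma dotv_unit_vector: "dotv (\<lambda>j. if j = i then 1 else 0) m = m $ i"
  unfolding dotv_def by (simp add: mult_delta_left sum.delta)

lemma lincomb_disjoint_support_nonzero:
  fixes f g :: "'a \<Rightarrow> real"
  assumes "f \<noteq> (\<lambda>_. 0)" "g \<noteq> (\<lambda>_. 0)" "\<forall>k. f k = 0 \<or> g k = 0" "a \<noteq> 0 \<or> b \<noteq> 0"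
  shows "(\<lambda>j. a * f j + b * g j) \<noteq> (\<lambda>_. 0)"
proof
  assume zero: "(\<lambda>j. a * f j + b * g j) = (\<lambda>_. 0)"
  obtain k1 where k1: "f k1 \<noteq> 0" using assms(1) by auto
  obtain k2 where k2: "g k2 \<noteq> 0" using assms(2) by auto
  have "a * f k1 + b * g k1 = 0" "a * f k2 + b * g k2 = 0"
    using zero by (auto dest: fun_cong)
  then show False
    using assms(3,4) k1 k2 by (metis add.right_neutral add_0 mult_eq_0_iff)
qed

text \<open>Strict since disjointly supported nonzero vectors are linearly independent.\<close>
lemma bil_Cauchy_Schwarz_disjoint_support_strict:
  assumes pd: "symmetric_pd S"
    and "f \<noteq> (\<lambda>_. 0)" "g \<noteq> (\<lambda>_. 0)" "\<forall>k. f k = 0 \<or> g k = 0"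
  shows "(bil S f g)\<^sup>2 < bil S f f * bil S g g"
proof -
  have sym: "transpose S = S" using pd unfolding symmetric_pd_def by simp
  define c where "c = bil S f g"
  define vf where "vf = bil S f f"
  define vg where "vg = bil S g g"
  have vf: "vf > 0" unfolding vf_def using bil_self_pos pd assms(2) by blast
  define h where "h = (\<lambda>j. c * f j + (- vf) * g j)"
  have "h \<noteq> (\<lambda>_. 0)"
    unfolding h_def using lincomb_disjoint_support_nonzero[OF assms(2-4), of c "- vf"] vf by simp
  then have "bil S h h > 0" by (rule bil_self_pos[OF pd])
  also have "bil S h h = vf * (vf * vg - c\<^sup>2)"
    unfolding h_def bil_lincomb_left bil_lincomb_right[OF sym] c_def vf_def vg_def
    using bil_commute[OF sym, of g f] by (simp add: algebra_simps power2_eq_square)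
  finally show ?thesis
    using vf unfolding c_def vf_def vg_def by (simp add: zero_less_mult_iff)
qed

lemma binary_quadratic_form_pos:
  fixes a b c x y :: real
  assumes "a > 0" "a * c - b\<^sup>2 > 0" "x \<noteq> 0 \<or> y \<noteq> 0"
  shows "a * x\<^sup>2 + 2 * b * x * y + c * y\<^sup>2 > 0"
proof -
  have "(a * x + b * y)\<^sup>2 + (a * c - b\<^sup>2) * y\<^sup>2 > 0"
  proof (cases "y = 0")
    case True then show ?thesis using assms by simp
  next
    case False then show ?thesis
      using assms(2) by (metis add_nonneg_pos zero_le_power2 zero_less_mult_iff zero_less_power2)
  qed
  also have "(a * x + b * y)\<^sup>2 + (a * c - b\<^sup>2) * y\<^sup>2 = a * (a * x\<^sup>2 + 2 * b * x * y + c * y\<^sup>2)"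
    by (simp add: algebra_simps power2_eq_square)
  finally show ?thesis
    using assms(1) by (simp add: zero_less_mult_iff)
qed

lemma raw_alphas_signal_pos:
  assumes pd: "symmetric_pd S" and "0 \<le> \<gamma>" "\<gamma> \<le> 1"
    and nonzero: "wL \<noteq> (\<lambda>_. 0)" "wR \<noteq> (\<lambda>_. 0)" and disjoint: "\<forall>k. wL k = 0 \<or> wR k = 0"
    and signal: "sL \<noteq> 0 \<or> sR \<noteq> 0"
    and alphas: "raw_alphas S \<gamma> (wL, bil S wL wL, sL) (wR, bil S wR wR, sR) = (aL, aR)"
  shows "aL * sL + aR * sR > 0"
proof -
  define c where "c = bil S wL wR"
  define vL where "vL = bil S wL wL"
  define vR where "vR = bil S wR wR"
  define \<Delta> where "\<Delta> = vL * vR - \<gamma>\<^sup>2 * c\<^sup>2"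
  have vR: "vR > 0" unfolding vR_def using bil_self_pos pd nonzero(2) by blast
  have "c\<^sup>2 < vL * vR"
    unfolding c_def vL_def vR_def
    by (rule bil_Cauchy_Schwarz_disjoint_support_strict[OF pd nonzero disjoint])
  moreover have "\<gamma>\<^sup>2 * c\<^sup>2 \<le> c\<^sup>2"
    using assms(2,3) by (simp add: mult_left_le_one_le power_le_one)
  ultimately have \<Delta>: "\<Delta> > 0" unfolding \<Delta>_def by linarith
  have "aL = (vR * sL - \<gamma> * c * sR) / \<Delta>" "aR = (vL * sR - \<gamma> * c * sL) / \<Delta>"
    using alphas unfolding raw_alphas_def c_def vL_def vR_def \<Delta>_def by (auto simp: Let_def)
  then have "aL * sL + aR * sR = (vR * sL\<^sup>2 + 2 * (- \<gamma> * c) * sL * sR + vL * sR\<^sup>2) / \<Delta>"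
    by (simp add: add_divide_distrib[symmetric] times_divide_eq_left[symmetric] algebra_simps
        power2_eq_square)
  moreover have "vR * sL\<^sup>2 + 2 * (- \<gamma> * c) * sL * sR + vL * sR\<^sup>2 > 0"
    using \<Delta> unfolding \<Delta>_def
    by (intro binary_quadratic_form_pos[OF vR _ signal]) (simp add: algebra_simps power2_eq_square)
  ultimately show ?thesis using \<Delta> by simp
qed

lemma hrp_representative: "\<exists>w. hrp S \<mu> \<gamma> t = (w, bil S w w, dotv w \<mu>)"
proof (cases t)
  case (Leaf i)
  then show ?thesis by (simp add: bil_unit_vectors dotv_unit_vector)
qed (simp add: Let_def split: prod.split)

lemma hrp_signal_eq_dotv: "hrp_signal S \<mu> \<gamma> t = dotv (fst (hrp S \<mu> \<gamma> t)) \<mu>"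
  using hrp_representative[of S \<mu> \<gamma> t] by (auto simp: hrp_signal_def)

lemma hrp_Node_weights:
  assumes "raw_alphas S \<gamma> (hrp S \<mu> \<gamma> l) (hrp S \<mu> \<gamma> r) = (aL, aR)"
  shows "fst (hrp S \<mu> \<gamma> (Node l r)) =
           (\<lambda>j. aL / (\<bar>aL\<bar> + \<bar>aR\<bar>) * fst (hrp S \<mu> \<gamma> l) j + aR / (\<bar>aL\<bar> + \<bar>aR\<bar>) * fst (hrp S \<mu> \<gamma> r) j)"
  using assms by (simp add: Let_def)

lemma hrp_weights_outside_leaves:
  "k \<notin> set (leaves t) \<Longrightarrow> fst (hrp S \<mu> \<gamma> t) k = 0"
  by (induction t) (auto simp: Let_def split: prod.split)

lemma subtrees_distinct_leaves:
  "t \<in> subtrees T \<Longrightarrow> distinct (leaves T) \<Longrightarrow> distinct (leaves t)"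
  by (induction T) auto

lemma hrp_Node_signal_pos:
  assumes pd: "symmetric_pd S" and \<gamma>: "0 \<le> \<gamma>" "\<gamma> \<le> 1"
    and distinct: "distinct (leaves (Node l r))"
    and nonzero: "fst (hrp S \<mu> \<gamma> l) \<noteq> (\<lambda>_. 0)" "fst (hrp S \<mu> \<gamma> r) \<noteq> (\<lambda>_. 0)"
    and signal: "hrp_signal S \<mu> \<gamma> l \<noteq> 0 \<or> hrp_signal S \<mu> \<gamma> r \<noteq> 0"
  shows "hrp_denominator S \<mu> \<gamma> (Node l r) > 0"
    and "hrp_signal S \<mu> \<gamma> (Node l r) > 0"
    and "fst (hrp S \<mu> \<gamma> (Node l r)) \<noteq> (\<lambda>_. 0)"
proof -
  obtain wL where hl: "hrp S \<mu> \<gamma> l = (wL, bil S wL wL, dotv wL \<mu>)"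
    using hrp_representative by blast
  obtain wR where hr: "hrp S \<mu> \<gamma> r = (wR, bil S wR wR, dotv wR \<mu>)"
    using hrp_representative by blast
  obtain aL aR where alphas: "raw_alphas S \<gamma> (hrp S \<mu> \<gamma> l) (hrp S \<mu> \<gamma> r) = (aL, aR)"
    by fastforce
  define Z where "Z = \<bar>aL\<bar> + \<bar>aR\<bar>"
  have disjoint: "\<forall>k. wL k = 0 \<or> wR k = 0"
    using distinct hrp_weights_outside_leaves[of _ l S \<mu> \<gamma>] hrp_weights_outside_leaves[of _ r S \<mu> \<gamma>]
    unfolding hl hr by auto
  have weights_nonzero: "wL \<noteq> (\<lambda>_. 0)" "wR \<noteq> (\<lambda>_. 0)"
    using nonzero unfolding hl hr by simp_all
  have combined_pos: "aL * dotv wL \<mu> + aR * dotv wR \<mu> > 0"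
    using signal alphas unfolding hl hr hrp_signal_def
    by (intro raw_alphas_signal_pos[OF pd \<gamma> weights_nonzero disjoint]) auto
  then have alpha_nonzero: "aL \<noteq> 0 \<or> aR \<noteq> 0" by auto
  then have Z: "Z > 0" unfolding Z_def by (cases "aL = 0") auto
  have "hrp_signal S \<mu> \<gamma> (Node l r) = (aL * dotv wL \<mu> + aR * dotv wR \<mu>) / Z"
    unfolding hrp_signal_eq_dotv hrp_Node_weights[OF alphas] hl hr dotv_lincomb
    by (simp add: Z_def add_divide_distrib)
  with combined_pos Z show "hrp_signal S \<mu> \<gamma> (Node l r) > 0" by simp
  show "hrp_denominator S \<mu> \<gamma> (Node l r) > 0"
    using alphas Z by (simp add: Z_def)
  have "aL / Z \<noteq> 0 \<or> aR / Z \<noteq> 0"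
    using alpha_nonzero Z by simp
  then show "fst (hrp S \<mu> \<gamma> (Node l r)) \<noteq> (\<lambda>_. 0)"
    unfolding hrp_Node_weights[OF alphas] hl hr fst_conv Z_def[symmetric]
    by (rule lincomb_disjoint_support_nonzero[OF weights_nonzero disjoint])
qed

lemma hrp_representative_nonzero:
  assumes pd: "symmetric_pd S" and \<gamma>: "0 \<le> \<gamma>" "\<gamma> \<le> 1" and \<mu>: "\<forall>i. \<mu> $ i \<noteq> 0"
  shows "distinct (leaves t) \<Longrightarrow> fst (hrp S \<mu> \<gamma> t) \<noteq> (\<lambda>_. 0) \<and> hrp_signal S \<mu> \<gamma> t \<noteq> 0"
proof (induction t)
  case (Leaf i)
  then show ?case using \<mu> by (auto simp: hrp_signal_def dest: fun_cong[where x = i])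
next
  case (Node l r)
  then show ?case using hrp_Node_signal_pos[OF pd \<gamma>, of l r \<mu>] by auto
qed

lemma hrp_internal_node_well_defined:
  assumes pd: "symmetric_pd S" and \<gamma>: "0 \<le> \<gamma>" "\<gamma> \<le> 1" and \<mu>: "\<forall>i. \<mu> $ i \<noteq> 0"
    and "distinct (leaves t)" and "is_internal t"
  shows "hrp_signal S \<mu> \<gamma> t \<noteq> 0 \<and> hrp_denominator S \<mu> \<gamma> t > 0"
proof (cases t)
  case (Node l r)
  then show ?thesis
    using assms(5) hrp_representative_nonzero[OF pd \<gamma> \<mu>, of l] hrp_representative_nonzero[OF pd \<gamma> \<mu>, of r]
      hrp_Node_signal_pos[OF pd \<gamma>, of l r \<mu>]
    by auto
qed (use assms(6) in simp)

lemma AE_coordinates_nonzero: "AE \<mu> in lborel. \<forall>i. (\<mu>::real^'n::finite) $ i \<noteq> 0"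
proof (rule eventually_all_finite)
  fix i :: 'n
  have "{x::real^'n. x $ i = 0} \<in> null_sets lebesgue"
    using negligible_standard_hyperplane_cart[of i] by (simp add: negligible_iff_null_sets)
  then have "AE \<mu> in lebesgue. (\<mu>::real^'n) $ i \<noteq> 0"
    by (rule AE_I') auto
  then show "AE \<mu> in lborel. (\<mu>::real^'n) $ i \<noteq> 0"
    by (simp add: AE_completion_iff)
qed

theorem mainTheorem14:
  fixes S :: "real^'n::finite^'n" and T :: "'n btree" and \<gamma> :: real
  assumes "symmetric_pd S"
    and "valid_tree T"
    and "0 \<le> \<gamma>" and "\<gamma> \<le> 1"
  shows "AE \<mu> in lborel.
           \<forall>t\<in>subtrees T. is_internal t \<longrightarrow>
             hrp_signal S \<mu> \<gamma> t \<noteq> 0 \<and> hrp_denominator S \<mu> \<gamma> t > 0"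
  using AE_coordinates_nonzero
proof (rule eventually_mono)
  fix \<mu> :: "real^'n"
  assume "\<forall>i. \<mu> $ i \<noteq> 0"
  then show "\<forall>t\<in>subtrees T. is_internal t \<longrightarrow>
               hrp_signal S \<mu> \<gamma> t \<noteq> 0 \<and> hrp_denominator S \<mu> \<gamma> t > 0"
    using hrp_internal_node_well_defined[OF assms(1,3,4)] subtrees_distinct_leaves assms(2)
    unfolding valid_tree_def by blast
qed

end
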